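(* Let $n$ be even, and for $m\ge1$ let $\mathcal{C}_m=\mathbb{C}\{e_1,\dots,e_m\}$ denote the complex Clifford algebra with generators satisfying $e_j^2=-1$, $e_je_k=-e_ke_j$ ($j\ne k$), of dimension $2^m$, with $\mathcal{C}_n\subset\mathcal{C}_{n+1}$ naturally. Suppose there is an invertible $2^{n/2}\times2^{n/2}$ matrix $P_n$ over $\mathcal{C}_n$, not depending on $a$, such that for every $a\in\mathcal{C}_n$ the matrix $\phi_n(a):=P_n(aI_{2^{n/2}})P_n^{-1}$ has all entries in $\mathbb{C}$. Let $e_{[n+1]}=e_1e_2\cdots e_{n+1}$ and $r=(-1)^{\frac12(n+1)(n+2)}$, so that $e_{[n+1]}^2=r$, and fix a square root $\sqrt r\in\mathbb{C}$. Then every $a\in\mathcal{C}_{n+1}$ can be written as $a=a_0+a_1e_{[n+1]}=a_0+e_{[n+1]}a_1$ with $a_0,a_1\in\mathcal{C}_n$. Define $\overline{a}=a_0-a_1e_{[n+1]}$ and $D_a=\mathrm{diag}(aI_{2^{n/2}},\overline{a}I_{2^{n/2}})$. Let $$P_{n+1}=\frac12\begin{pmatrix}(1+\frac{1}{\sqrt r}e_{[n+1]})P_n & -(\sqrt r-e_{[n+1]})P_n\\ \frac1r(\sqrt r-e_{[n+1]})P_n & (1+\frac{1}{\sqrt r}e_{[n+1]})P_n\end{pmatrix},$$ $$P_{n+1}'=\frac12\begin{pmatrix}P_n^{-1}(1+\frac{1}{\sqrt r}e_{[n+1]}) & P_n^{-1}(\sqrt r-e_{[n+1]})\\ -P_n^{-1}\frac1r(\sqrt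 r-e_{[n+1]}) & P_n^{-1}(1+\frac1{\sqrt r}e_{[n+1]})\end{pmatrix}.$$ Then $P_{n+1}$ is invertible with $P_{n+1}^{-1}=P_{n+1}'$, and $$P_{n+1}D_aP_{n+1}^{-1}=\begin{pmatrix}\phi_n(a_0)+\sqrt r\,\phi_n(a_1) & 0\\ 0 & \phi_n(a_0)-\sqrt r\,\phi_n(a_1)\end{pmatrix},$$ a block diagonal matrix with two $2^{n/2}\times2^{n/2}$ complex blocks.
   Context: For an element $c$ and a matrix $M$, $cM$ (resp. $Mc$) denotes the matrix with entries $cM_{jk}$ (resp. $M_{jk}c$). Complex scalars commute with all Clifford elements. *)

theory Defs
  imports Complex_Main
begin

text \<open>An element is a coefficient
  function on finite sets of generator indices: a = sum_A a(A) e_A, where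
  e_A = e_(i1) ... e_(ik) for A = {i1 < ... < ik}.  The algebra C_m is the
  subspace of elements supported on subsets of {1..m}; hence C_n is contained
  in C_(n+1) naturally.\<close>

type_synonym cl = "nat set \<Rightarrow> complex"

definition cl_in :: "nat \<Rightarrow> cl \<Rightarrow> bool" where
  "cl_in m a \<longleftrightarrow> (\<forall>A. a A \<noteq> 0 \<longrightarrow> A \<subseteq> {1..m})"

text \<open>sign in e_A e_B = sign(A,B) e_(A symdiff B)\<close>
definition cl_sign :: "nat set \<Rightarrow> nat set \<Rightarrow> complex" where
  "cl_sign A B = (-1) ^ (card {(i, j). i \<in> A \<and> j \<in> B \<and> j < i} + card (A \<inter> B))"

definition cl_mul :: "cl \<Rightarrow> cl \<Rightarrow> cl" where
  "cl_mul a b = (\<lambda>S. \<Sum>A\<in>{A. a A \<noteq> 0}. \<Sum>B\<in>{B. b B \<noteq> 0}.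
      if (A - B) \<union> (B - A) = S then cl_sign A B * a A * b B else 0)"

definition cl_add :: "cl \<Rightarrow> cl \<Rightarrow> cl" where
  "cl_add a b = (\<lambda>S. a S + b S)"

definition cl_minus :: "cl \<Rightarrow> cl \<Rightarrow> cl" where
  "cl_minus a b = (\<lambda>S. a S - b S)"

definition cl_neg :: "cl \<Rightarrow> cl" where
  "cl_neg a = (\<lambda>S. - a S)"

definition cl_smul :: "complex \<Rightarrow> cl \<Rightarrow> cl" where
  "cl_smul c a = (\<lambda>S. c * a S)"

definition cl_scal :: "complex \<Rightarrow> cl" where
  "cl_scal c = (\<lambda>S. if S = {} then c else 0)"

definition cl_zero :: cl where "cl_zero = cl_scal 0"
definition cl_one :: cl where "cl_one = cl_scal 1"

definition cl_is_scalar :: "cl \<Rightarrow> bool" where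
  "cl_is_scalar a \<longleftrightarrow> (\<exists>c. a = cl_scal c)"

definition cl_gen :: "nat \<Rightarrow> cl" where
  "cl_gen j = (\<lambda>S. if S = {j} then 1 else 0)"

definition cl_top :: "nat \<Rightarrow> cl" where
  "cl_top m = foldr cl_mul (map cl_gen [1..<m+1]) cl_one"

text \<open>Square matrices over the Clifford algebra, as functions of row/column index;
  only indices < N are meaningful.\<close>
type_synonym clmat = "nat \<Rightarrow> nat \<Rightarrow> cl"

definition mat_mul :: "nat \<Rightarrow> clmat \<Rightarrow> clmat \<Rightarrow> clmat" where
  "mat_mul N A B = (\<lambda>i j S. \<Sum>k<N. cl_mul (A i k) (B k j) S)"

definition mat_eq :: "nat \<Rightarrow> clmat \<Rightarrow> clmat \<Rightarrow> bool" where
  "mat_eq N A B \<longleftrightarrow> (\<forall>i<N. \<forall>j<N. A i j = B i j)"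

definition mat_over :: "nat \<Rightarrow> nat \<Rightarrow> clmat \<Rightarrow> bool" where
  "mat_over m N A \<longleftrightarrow> (\<forall>i<N. \<forall>j<N. cl_in m (A i j))"

definition mat_diag_const :: "cl \<Rightarrow> clmat" where
  "mat_diag_const a = (\<lambda>i j. if i = j then a else cl_zero)"

definition mat_id :: clmat where "mat_id = mat_diag_const cl_one"
definition mat_zero :: clmat where "mat_zero = (\<lambda>i j. cl_zero)"

definition mat_lmul :: "cl \<Rightarrow> clmat \<Rightarrow> clmat" where
  "mat_lmul c M = (\<lambda>i j. cl_mul c (M i j))"
definition mat_rmul :: "clmat \<Rightarrow> cl \<Rightarrow> clmat" where
  "mat_rmul M c = (\<lambda>i j. cl_mul (M i j) c)"

definition mat_smul :: "complex \<Rightarrow> clmat \<Rightarrow> clmat" where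
  "mat_smul z M = (\<lambda>i j. cl_smul z (M i j))"
definition mat_add :: "clmat \<Rightarrow> clmat \<Rightarrow> clmat" where
  "mat_add A B = (\<lambda>i j. cl_add (A i j) (B i j))"
definition mat_minus :: "clmat \<Rightarrow> clmat \<Rightarrow> clmat" where
  "mat_minus A B = (\<lambda>i j. cl_minus (A i j) (B i j))"
definition mat_neg :: "clmat \<Rightarrow> clmat" where
  "mat_neg A = (\<lambda>i j. cl_neg (A i j))"

definition mat_block :: "nat \<Rightarrow> clmat \<Rightarrow> clmat \<Rightarrow> clmat \<Rightarrow> clmat \<Rightarrow> clmat" where
  "mat_block N A B C D = (\<lambda>i j.
     if i < N then (if j < N then A i j else B i (j - N))
     else (if j < N then C (i - N) j else D (i - N) (j - N)))"

end

theory Submission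
  imports Defs "HOL-Library.Function_Algebras"
begin

(* Write e = e_[n+1] and s = sqrt r. As n + 1 is odd, e commutes with every element of C_(n+1),
   and e^2 = s^2. So all coefficients occurring below lie in the commutative algebra spanned by
   1 and e, where c = (1 + e/s)/2 and d = (1 - e/s)/2 are complementary idempotents with
   e c = s c and e d = -s d. In these terms P_(n+1) = [[c, -s d], [d/s, c]] (x) P_n and
   P'_(n+1) = [[c, s d], [-d/s, c]] (x) P_n^-1. The two coefficient matrices are mutually inverse,
   and conjugating diag(a, a-bar) gives diag(c phi(a) + d phi(a-bar), d phi(a) + c phi(a-bar)),
   the off-diagonal blocks vanishing because c d = 0. Since phi(a0) and phi(a1) are scalars,
   phi(a0 +- a1 e) = phi(a0) +- phi(a1) e, and e acts as s on c and as -s on d.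
   Everything rests on associativity of the concrete Clifford product, which holds because the
   sign of e_A e_B is a bicharacter with respect to symmetric difference. *)

section \<open>Signs\<close>

lemma sym_diff_cancel_left [simp]: "sym_diff A (sym_diff A B) = B"
  and sym_diff_cancel_right [simp]: "sym_diff (sym_diff A B) B = A"
  by auto

lemma cl_sign_empty [simp]: "cl_sign {} A = 1" "cl_sign A {} = 1"
  unfolding cl_sign_def by simp_all

definition le_pairs :: "nat set \<Rightarrow> nat set \<Rightarrow> (nat \<times> nat) set" where
  "le_pairs A B = {(i, j). i \<in> A \<and> j \<in> B \<and> j \<le> i}"

lemma finite_le_pairs: "finite A \<Longrightarrow> finite B \<Longrightarrow> finite (le_pairs A B)"
  unfolding le_pairs_def by (rule finite_subset[of _ "A \<times> B"]) auto

text \<open>In this form the sign is visibly multiplicative in each argument with respect to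
  symmetric difference; this cocycle property is what makes the product associative.\<close>

lemma cl_sign_le_pairs:
  assumes "finite A" "finite B"
  shows "cl_sign A B = (-1) ^ card (le_pairs A B)"
proof -
  have split: "le_pairs A B = {(i, j). i \<in> A \<and> j \<in> B \<and> j < i} \<union> (\<lambda>i. (i, i)) ` (A \<inter> B)"
    unfolding le_pairs_def by auto
  have "card (le_pairs A B) = card {(i, j). i \<in> A \<and> j \<in> B \<and> j < i} + card (A \<inter> B)"
    unfolding split using assms
    by (subst card_Un_disjoint)
       (auto intro: finite_subset[of _ "A \<times> B"] simp: card_image inj_on_def)
  then show ?thesis
    unfolding cl_sign_def by simp
qed

lemma minus_one_power_add_even:
  assumes "a + b = c + 2 * k"
  shows "(-1::complex) ^ a * (-1) ^ b = (-1) ^ c"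
proof -
  have "(-1::complex) ^ a * (-1) ^ b = (-1) ^ c * ((-1) ^ 2) ^ k"
    by (simp only: assms power_add [symmetric] power_mult [symmetric])
  then show ?thesis
    by simp
qed

lemma minus_one_power_card_sym_diff:
  assumes "finite X" "finite Y"
  shows "(-1::complex) ^ card (sym_diff X Y) = (-1) ^ card X * (-1) ^ card Y"
proof -
  have "card (sym_diff X Y) = card (X - Y) + card (Y - X)"
    using assms by (intro card_Un_disjoint) auto
  then have "card X + card Y = card (sym_diff X Y) + 2 * card (X \<inter> Y)"
    using assms card_Int_Diff[of X Y] card_Int_Diff[of Y X] by (simp add: Int_commute)
  then show ?thesis
    by (simp add: minus_one_power_add_even)
qed

lemma le_pairs_sym_diff_left: "le_pairs (sym_diff A B) C = sym_diff (le_pairs A C) (le_pairs B C)"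
  unfolding le_pairs_def by auto

lemma le_pairs_sym_diff_right: "le_pairs A (sym_diff B C) = sym_diff (le_pairs A B) (le_pairs A C)"
  unfolding le_pairs_def by auto

lemma cl_sign_sym_diff_left:
  assumes "finite A" "finite B" "finite C"
  shows "cl_sign (sym_diff A B) C = cl_sign A C * cl_sign B C"
  using assms
  by (simp add: cl_sign_le_pairs le_pairs_sym_diff_left minus_one_power_card_sym_diff finite_le_pairs)

lemma cl_sign_sym_diff_right:
  assumes "finite A" "finite B" "finite C"
  shows "cl_sign A (sym_diff B C) = cl_sign A B * cl_sign A C"
  using assms
  by (simp add: cl_sign_le_pairs le_pairs_sym_diff_right minus_one_power_card_sym_diff finite_le_pairs)

lemma cl_sign_commute:
  assumes "finite A" "finite B"
  shows "cl_sign B A = (-1) ^ (card A * card B + card (A \<inter> B)) * cl_sign A B"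
proof -
  have cover: "le_pairs A B \<union> prod.swap ` le_pairs B A = A \<times> B"
    and overlap: "le_pairs A B \<inter> prod.swap ` le_pairs B A = (\<lambda>i. (i, i)) ` (A \<inter> B)"
    unfolding le_pairs_def by auto
  have "card (prod.swap ` le_pairs B A) = card (le_pairs B A)"
    by (rule card_image) simp
  then have "card (le_pairs A B) + card (le_pairs B A) = card A * card B + card (A \<inter> B)"
    using card_Un_Int[of "le_pairs A B" "prod.swap ` le_pairs B A"] assms
    by (simp add: cover overlap finite_le_pairs card_image inj_on_def card_cartesian_product)
  then have "(card A * card B + card (A \<inter> B)) + card (le_pairs A B)
      = card (le_pairs B A) + 2 * card (le_pairs A B)"
    by simp
  then have "(-1::complex) ^ (card A * card B + card (A \<inter> B)) * (-1) ^ card (le_pairs A B)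
      = (-1) ^ card (le_pairs B A)"
    by (rule minus_one_power_add_even)
  with assms show ?thesis
    by (simp add: cl_sign_le_pairs)
qed

section \<open>The Clifford product on C_M\<close>

lemma cl_add_eq [simp]: "cl_add a b = a + b"
  unfolding cl_add_def by auto

lemma cl_minus_eq [simp]: "cl_minus a b = a - b"
  unfolding cl_minus_def by auto

lemma cl_neg_eq [simp]: "cl_neg a = - a"
  unfolding cl_neg_def by auto

lemma cl_zero_eq [simp]: "cl_zero = 0"
  unfolding cl_zero_def cl_scal_def by auto

lemma cl_inD: "cl_in M a \<Longrightarrow> a A \<noteq> 0 \<Longrightarrow> A \<subseteq> {1..M}"
  unfolding cl_in_def by blast

lemma cl_in_mono: "cl_in m a \<Longrightarrow> m \<le> M \<Longrightarrow> cl_in M a"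
  unfolding cl_in_def by fastforce

lemma cl_smul_apply: "cl_smul z a S = z * a S"
  unfolding cl_smul_def ..

text \<open>Outside C_M the sums defining cl_mul may range over infinite sets and then collapse
  to 0; this is why the algebraic laws are stated for elements of C_M.\<close>

lemma cl_mul_expand:
  assumes "cl_in M a" "cl_in M b"
  shows "cl_mul a b S = (\<Sum>A\<in>Pow {1..M}. cl_sign A (sym_diff A S) * a A * b (sym_diff A S))"
proof -
  have "finite {B. b B \<noteq> 0}"
    using assms(2) by (auto intro: finite_subset[of _ "Pow {1..M}"] dest: cl_inD)
  then have inner: "(\<Sum>B\<in>{B. b B \<noteq> 0}. if sym_diff A B = S then cl_sign A B * a A * b B else 0)
      = cl_sign A (sym_diff A S) * a A * b (sym_diff A S)" for A
  proof -
    have "sym_diff A B = S \<longleftrightarrow> B = sym_diff A S" for B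
      by auto
    with \<open>finite {B. b B \<noteq> 0}\<close> show ?thesis
      by (simp add: sum.delta')
  qed
  show ?thesis
    unfolding cl_mul_def inner
    by (rule sum.mono_neutral_left) (use assms(1) in \<open>auto simp: cl_in_def\<close>)
qed

lemma cl_in_mul:
  assumes a: "cl_in M a" and b: "cl_in M b"
  shows "cl_in M (cl_mul a b)"
  unfolding cl_in_def
proof (intro allI impI)
  fix S assume "cl_mul a b S \<noteq> 0"
  then obtain A where "A \<subseteq> {1..M}" "b (sym_diff A S) \<noteq> 0"
    unfolding cl_mul_expand[OF a b] by (auto elim: sum.not_neutral_contains_not_neutral)
  with cl_inD[OF b] show "S \<subseteq> {1..M}" by blast
qed

lemma cl_in_add: "cl_in M a \<Longrightarrow> cl_in M b \<Longrightarrow> cl_in M (a + b)"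
  unfolding cl_in_def by (metis add.right_neutral plus_fun_apply)

lemma cl_in_diff: "cl_in M a \<Longrightarrow> cl_in M b \<Longrightarrow> cl_in M (a - b)"
  unfolding cl_in_def by (metis diff_zero minus_apply)

lemma cl_in_smul: "cl_in M a \<Longrightarrow> cl_in M (cl_smul z a)"
  unfolding cl_in_def cl_smul_def by auto

lemma cl_in_scal: "cl_in M (cl_scal z)"
  unfolding cl_in_def cl_scal_def by auto

lemma cl_in_zero [simp]: "cl_in M 0"
  unfolding cl_in_def by simp

lemma cl_in_sum: "(\<And>k. k \<in> K \<Longrightarrow> cl_in M (f k)) \<Longrightarrow> cl_in M (\<Sum>k\<in>K. f k)"
  by (induction K rule: infinite_finite_induct) (auto intro: cl_in_add)

lemma cl_mul_zero_left [simp]: "cl_mul 0 b = 0"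
  and cl_mul_zero_right [simp]: "cl_mul a 0 = 0"
  unfolding cl_mul_def by auto

lemma cl_mul_add_left: "cl_in M a \<Longrightarrow> cl_in M a' \<Longrightarrow> cl_in M b \<Longrightarrow>
    cl_mul (a + a') b = cl_mul a b + cl_mul a' b"
  by (rule ext) (simp add: cl_mul_expand[of M] cl_in_add sum.distrib[symmetric] ring_distribs)

lemma cl_mul_add_right: "cl_in M a \<Longrightarrow> cl_in M b \<Longrightarrow> cl_in M b' \<Longrightarrow>
    cl_mul a (b + b') = cl_mul a b + cl_mul a b'"
  by (rule ext) (simp add: cl_mul_expand[of M] cl_in_add sum.distrib[symmetric] ring_distribs)

lemma cl_mul_diff_left: "cl_in M a \<Longrightarrow> cl_in M a' \<Longrightarrow> cl_in M b \<Longrightarrow>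
    cl_mul (a - a') b = cl_mul a b - cl_mul a' b"
  by (rule ext) (simp add: cl_mul_expand[of M] cl_in_diff sum_subtractf[symmetric] ring_distribs)

lemma cl_mul_diff_right: "cl_in M a \<Longrightarrow> cl_in M b \<Longrightarrow> cl_in M b' \<Longrightarrow>
    cl_mul a (b - b') = cl_mul a b - cl_mul a b'"
  by (rule ext) (simp add: cl_mul_expand[of M] cl_in_diff sum_subtractf[symmetric] ring_distribs)

lemma cl_mul_smul_left: "cl_in M a \<Longrightarrow> cl_in M b \<Longrightarrow>
    cl_mul (cl_smul z a) b = cl_smul z (cl_mul a b)"
  by (rule ext) (simp add: cl_mul_expand[of M] cl_in_smul cl_smul_apply sum_distrib_left mult_ac)

lemma cl_mul_smul_right: "cl_in M a \<Longrightarrow> cl_in M b \<Longrightarrow>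
    cl_mul a (cl_smul z b) = cl_smul z (cl_mul a b)"
  by (rule ext) (simp add: cl_mul_expand[of M] cl_in_smul cl_smul_apply sum_distrib_left mult_ac)

lemma cl_mul_sum_left:
  "cl_in M b \<Longrightarrow> (\<And>k. k \<in> K \<Longrightarrow> cl_in M (f k)) \<Longrightarrow>
    cl_mul (\<Sum>k\<in>K. f k) b = (\<Sum>k\<in>K. cl_mul (f k) b)"
  by (induction K rule: infinite_finite_induct) (auto simp: cl_mul_add_left[of M] cl_in_sum)

lemma cl_mul_sum_right:
  "cl_in M a \<Longrightarrow> (\<And>k. k \<in> K \<Longrightarrow> cl_in M (f k)) \<Longrightarrow>
    cl_mul a (\<Sum>k\<in>K. f k) = (\<Sum>k\<in>K. cl_mul a (f k))"
  by (induction K rule: infinite_finite_induct) (auto simp: cl_mul_add_right[of M] cl_in_sum)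

lemma cl_mul_scal_left: "cl_in M a \<Longrightarrow> cl_mul (cl_scal z) a = cl_smul z a"
proof (rule ext)
  fix S assume a: "cl_in M a"
  have "cl_mul (cl_scal z) a S = (\<Sum>A\<in>Pow {1..M}. if A = {} then z * a S else 0)"
    unfolding cl_mul_expand[OF cl_in_scal a] by (rule sum.cong) (auto simp: cl_scal_def)
  then show "cl_mul (cl_scal z) a S = cl_smul z a S"
    by (simp add: cl_smul_apply)
qed

lemma cl_mul_scal_right: "cl_in M a \<Longrightarrow> cl_mul a (cl_scal z) = cl_smul z a"
proof (rule ext)
  fix S assume a: "cl_in M a"
  have "cl_mul a (cl_scal z) S = (\<Sum>A\<in>Pow {1..M}. if A = S then z * a S else 0)"
    unfolding cl_mul_expand[OF a cl_in_scal] by (rule sum.cong) (auto simp: cl_scal_def)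
  then show "cl_mul a (cl_scal z) S = cl_smul z a S"
    using cl_inD[OF a] by (auto simp: cl_smul_apply)
qed

lemma cl_mul_assoc:
  assumes a: "cl_in M a" and b: "cl_in M b" and c: "cl_in M c"
  shows "cl_mul (cl_mul a b) c = cl_mul a (cl_mul b c)"
proof (rule ext)
  fix S
  define U where "U = Pow {1..M}"
  have finU: "finite X" if "X \<in> U" for X
    using that finite_subset unfolding U_def by blast
  have shift: "(\<Sum>D\<in>U. f D) = (\<Sum>B\<in>U. f (sym_diff A B))"
    if "A \<in> U" for A and f :: "nat set \<Rightarrow> complex"
    by (rule sum.reindex_bij_witness[of _ "sym_diff A" "sym_diff A"])
       (use that in \<open>auto simp: U_def\<close>)
  have cocycle: "cl_sign (sym_diff A B) (sym_diff (sym_diff A B) S) * (cl_sign A B * a A * b B)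
        * c (sym_diff (sym_diff A B) S)
      = cl_sign A (sym_diff A S) * a A * (cl_sign B (sym_diff B (sym_diff A S)) * b B
        * c (sym_diff B (sym_diff A S)))" if "A \<in> U" "B \<in> U" for A B
  proof -
    define C where "C = sym_diff B (sym_diff A S)"
    have C: "sym_diff (sym_diff A B) S = C" "sym_diff B C = sym_diff A S"
      unfolding C_def by auto
    have "cl_sign (sym_diff A B) C * cl_sign A B = cl_sign A (sym_diff A S) * cl_sign B C"
      if "c C \<noteq> 0"
    proof -
      have "finite C"
        using cl_inD[OF c that] by (rule finite_subset) simp
      then show ?thesis
        using finU \<open>A \<in> U\<close> \<open>B \<in> U\<close>
        by (simp add: cl_sign_sym_diff_left cl_sign_sym_diff_right flip: C(2))
    qed
    then have "cl_sign (sym_diff A B) C * cl_sign A B * (a A * b B * c C)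
        = cl_sign A (sym_diff A S) * cl_sign B C * (a A * b B * c C)"
      by (cases "c C = 0") simp_all
    then show ?thesis
      unfolding C C_def[symmetric] by (simp add: mult_ac)
  qed
  have "cl_mul (cl_mul a b) c S = (\<Sum>D\<in>U. \<Sum>A\<in>U. cl_sign D (sym_diff D S) *
       (cl_sign A (sym_diff A D) * a A * b (sym_diff A D)) * c (sym_diff D S))"
    unfolding U_def cl_mul_expand[OF cl_in_mul[OF a b] c] cl_mul_expand[OF a b]
    by (simp add: sum_distrib_left sum_distrib_right)
  also have "\<dots> = (\<Sum>A\<in>U. \<Sum>D\<in>U. cl_sign D (sym_diff D S) *
       (cl_sign A (sym_diff A D) * a A * b (sym_diff A D)) * c (sym_diff D S))"
    by (rule sum.swap)
  also have "\<dots> = (\<Sum>A\<in>U. \<Sum>B\<in>U. cl_sign (sym_diff A B) (sym_diff (sym_diff A B) S) *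
       (cl_sign A (sym_diff A (sym_diff A B)) * a A * b (sym_diff A (sym_diff A B)))
       * c (sym_diff (sym_diff A B) S))"
    by (rule sum.cong[OF refl], rule shift)
  also have "\<dots> = (\<Sum>A\<in>U. \<Sum>B\<in>U. cl_sign A (sym_diff A S) * a A *
       (cl_sign B (sym_diff B (sym_diff A S)) * b B * c (sym_diff B (sym_diff A S))))"
    by (intro sum.cong refl) (simp only: sym_diff_cancel_left cocycle)
  also have "\<dots> = cl_mul a (cl_mul b c) S"
    unfolding U_def cl_mul_expand[OF a cl_in_mul[OF b c]] cl_mul_expand[OF b c]
    by (simp add: sum_distrib_left mult.assoc)
  finally show "cl_mul (cl_mul a b) c S = cl_mul a (cl_mul b c) S" .
qed

section \<open>The pseudoscalar e_[m]\<close>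

definition cl_basis :: "nat set \<Rightarrow> cl" where
  "cl_basis A = (\<lambda>S. if S = A then 1 else 0)"

lemma cl_in_basis: "A \<subseteq> {1..M} \<Longrightarrow> cl_in M (cl_basis A)"
  unfolding cl_in_def cl_basis_def by auto

lemma cl_mul_basis: "cl_mul (cl_basis A) (cl_basis B) = cl_smul (cl_sign A B) (cl_basis (sym_diff A B))"
proof -
  have "{X. cl_basis A X \<noteq> 0} = {A}" "{X. cl_basis B X \<noteq> 0} = {B}"
    by (auto simp: cl_basis_def)
  then show ?thesis
    unfolding cl_mul_def by (auto simp: cl_basis_def cl_smul_def)
qed

lemma cl_mul_basis_left:
  assumes "A \<subseteq> {1..M}" "cl_in M b"
  shows "cl_mul (cl_basis A) b S = cl_sign A (sym_diff A S) * b (sym_diff A S)"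
  unfolding cl_mul_expand[OF cl_in_basis[OF assms(1)] assms(2)] using assms(1)
  by (simp add: cl_basis_def if_distrib if_distribR sum.delta' cong: if_cong)

lemma cl_mul_basis_right:
  assumes "A \<subseteq> {1..M}" "cl_in M b"
  shows "cl_mul b (cl_basis A) S = cl_sign (sym_diff A S) A * b (sym_diff A S)"
proof -
  have "sym_diff B S = A \<longleftrightarrow> B = sym_diff A S" for B
    by auto
  then have "cl_mul b (cl_basis A) S
      = (\<Sum>B\<in>Pow {1..M}. if B = sym_diff A S then cl_sign B A * b B else 0)"
    unfolding cl_mul_expand[OF assms(2) cl_in_basis[OF assms(1)]]
    by (intro sum.cong refl) (auto simp: cl_basis_def)
  then show ?thesis
    using cl_inD[OF assms(2), of "sym_diff A S"] by auto
qed

lemma cl_top_eq_basis: "cl_top m = cl_basis {1..m}"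
proof -
  have "foldr cl_mul (map cl_gen [k..<Suc m]) cl_one = cl_basis {k..m}" for k
  proof (induction "Suc m - k" arbitrary: k)
    case 0
    then show ?case
      by (simp add: cl_one_def cl_scal_def cl_basis_def)
  next
    case (Suc d)
    then have "[k..<Suc m] = k # [Suc k..<Suc m]" "sym_diff {k} {Suc k..m} = {k..m}"
      by (auto simp: upt_conv_Cons)
    moreover have "le_pairs {k} {Suc k..m} = {}"
      unfolding le_pairs_def by auto
    then have "cl_sign {k} {Suc k..m} = 1"
      by (simp add: cl_sign_le_pairs)
    ultimately show ?case
      using Suc by (simp add: cl_gen_def cl_mul_basis cl_smul_def flip: cl_basis_def)
  qed
  then show ?thesis
    unfolding cl_top_def by simp
qed

lemma card_le_pairs_interval: "card (le_pairs {1..m} {1..m}) = m * (m + 1) div 2"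
proof (induction m)
  case 0
  then show ?case
    by (simp add: le_pairs_def)
next
  case (Suc m)
  have "le_pairs {1..Suc m} {1..Suc m} = le_pairs {1..m} {1..m} \<union> Pair (Suc m) ` {1..Suc m}"
    unfolding le_pairs_def by auto
  moreover have "card (le_pairs {1..m} {1..m} \<union> Pair (Suc m) ` {1..Suc m})
      = card (le_pairs {1..m} {1..m}) + card (Pair (Suc m) ` {1..Suc m})"
    using finite_le_pairs[of "{1..m}" "{1..m}"]
    by (intro card_Un_disjoint) (auto simp: le_pairs_def)
  ultimately have "card (le_pairs {1..Suc m} {1..Suc m}) = card (le_pairs {1..m} {1..m}) + Suc m"
    by (simp add: card_image inj_on_def)
  then show ?case
    using Suc by simp
qed

lemma cl_top_square: "cl_mul (cl_top m) (cl_top m) = cl_scal ((-1) ^ (m * (m + 1) div 2))"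
  unfolding cl_top_eq_basis cl_mul_basis cl_sign_le_pairs[OF finite_atLeastAtMost finite_atLeastAtMost]
    card_le_pairs_interval
  by (auto simp: cl_smul_def cl_basis_def cl_scal_def)

lemma cl_top_decompose:
  assumes "cl_in (n + 1) a"
  shows "\<exists>a0 a1. cl_in n a0 \<and> cl_in n a1 \<and> a = a0 + cl_mul a1 (cl_top (n + 1))"
proof -
  define e where "e = cl_top (n + 1)"
  (* a0 collects the blades of a without e_(n+1); the others are those of a1 e, and e^2 = r
     is invertible *)
  define a0 where "a0 = (\<lambda>S. if n + 1 \<in> S then 0 else a S)"
  define r :: complex where "r = (-1) ^ ((n + 1) * (n + 2) div 2)"
  define a1 where "a1 = cl_smul (1 / r) (cl_mul (a - a0) e)"
  have e: "cl_in (n + 1) e" "e = cl_basis {1..n + 1}"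
    unfolding e_def cl_top_eq_basis by (auto intro: cl_in_basis)
  have a0: "cl_in n a0"
    using assms by (fastforce simp: cl_in_def a0_def subset_iff le_Suc_eq split: if_splits)
  then have d: "cl_in (n + 1) (a - a0)"
    using assms cl_in_mono[OF a0, of "n + 1"] by (simp add: cl_in_diff)
  have "cl_in n (cl_mul (a - a0) e)"
    unfolding cl_in_def
  proof (intro allI impI)
    fix S assume "cl_mul (a - a0) e S \<noteq> 0"
    define T where "T = sym_diff {1..n + 1} S"
    have "(a - a0) T \<noteq> 0"
      using \<open>cl_mul (a - a0) e S \<noteq> 0\<close>
      unfolding e(2) cl_mul_basis_right[OF order_refl d] T_def by auto
    then have "n + 1 \<in> T" "T \<subseteq> {1..n + 1}"
      using cl_inD[OF assms] unfolding a0_def by (auto split: if_splits)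
    moreover have "S = sym_diff {1..n + 1} T"
      unfolding T_def by simp
    ultimately show "S \<subseteq> {1..n}"
      by (auto simp: le_Suc_eq)
  qed
  then have a1: "cl_in n a1"
    unfolding a1_def by (rule cl_in_smul)
  have "cl_mul e e = cl_scal r"
    unfolding e_def r_def using cl_top_square[of "n + 1"] by simp
  then have "cl_mul a1 e = cl_smul (1 / r) (cl_smul r (a - a0))"
    unfolding a1_def using e d
    by (simp add: cl_mul_smul_left[of "n + 1"] cl_in_mul cl_mul_assoc[of "n + 1"] cl_mul_scal_right)
  also have "\<dots> = a - a0"
    by (auto simp: cl_smul_def r_def)
  finally show ?thesis
    using a0 a1 unfolding e_def by force
qed

section \<open>Central elements and the span of 1 and e\<close>

definition cl_central :: "nat \<Rightarrow> cl \<Rightarrow> bool" where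
  "cl_central M g \<longleftrightarrow> cl_in M g \<and> (\<forall>b. cl_in M b \<longrightarrow> cl_mul g b = cl_mul b g)"

lemma cl_centralD: "cl_central M g \<Longrightarrow> cl_in M g"
  and cl_central_commute: "cl_central M g \<Longrightarrow> cl_in M b \<Longrightarrow> cl_mul g b = cl_mul b g"
  unfolding cl_central_def by blast+

lemma cl_central_scal: "cl_central M (cl_scal z)"
  unfolding cl_central_def by (simp add: cl_in_scal cl_mul_scal_left cl_mul_scal_right)

lemma cl_central_add: "cl_central M g \<Longrightarrow> cl_central M h \<Longrightarrow> cl_central M (g + h)"
  unfolding cl_central_def by (auto simp: cl_in_add cl_mul_add_left[of M] cl_mul_add_right[of M])

lemma cl_central_smul: "cl_central M g \<Longrightarrow> cl_central M (cl_smul z g)"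
  unfolding cl_central_def by (auto simp: cl_in_smul cl_mul_smul_left[of M] cl_mul_smul_right[of M])

lemma cl_mul_central_interchange:
  assumes "cl_central M a" "cl_central M b" "cl_in M x" "cl_in M y"
  shows "cl_mul (cl_mul a x) (cl_mul b y) = cl_mul (cl_mul a b) (cl_mul x y)"
proof -
  have a: "cl_in M a" and b: "cl_in M b"
    using assms(1,2) by (auto dest: cl_centralD)
  have "cl_mul x (cl_mul b y) = cl_mul (cl_mul x b) y"
    using assms(3,4) b by (simp add: cl_mul_assoc[of M])
  also have "\<dots> = cl_mul (cl_mul b x) y"
    using cl_central_commute[OF assms(2,3)] by simp
  also have "\<dots> = cl_mul b (cl_mul x y)"
    using assms(3,4) b by (simp add: cl_mul_assoc[of M])
  finally show ?thesis
    using assms(3,4) a b by (simp add: cl_mul_assoc[of M] cl_in_mul)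
qed

lemma cl_central_top:
  assumes "odd m"
  shows "cl_central m (cl_top m)"
  unfolding cl_central_def
proof (intro conjI allI impI ext)
  show "cl_in m (cl_top m)"
    unfolding cl_top_eq_basis by (simp add: cl_in_basis)
  fix b S assume b: "cl_in m b"
  define B where "B = sym_diff {1..m} S"
  have "cl_sign {1..m} B = cl_sign B {1..m}" if "B \<subseteq> {1..m}"
  proof -
    have "even (m * card B + card B)"
      using \<open>odd m\<close> by simp
    then show ?thesis
      using that cl_sign_commute[of "{1..m}" B] finite_subset[OF that]
      by (simp add: Int_absorb1)
  qed
  then show "cl_mul (cl_top m) b S = cl_mul b (cl_top m) S"
    unfolding cl_top_eq_basis cl_mul_basis_left[OF order_refl b]
      cl_mul_basis_right[OF order_refl b] B_def[symmetric]
    using cl_inD[OF b, of B] by auto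
qed

locale central_root =
  fixes M :: nat and e :: cl and s :: complex
  assumes e_central: "cl_central M e"
    and e_square: "cl_mul e e = cl_scal (s ^ 2)"
    and s_nonzero: "s \<noteq> 0"
begin

text \<open>lin x y is x + y e. These elements form a commutative algebra isomorphic to
  C[t]/(t^2 - s^2), so products of them reduce to arithmetic on the coordinates.\<close>

definition lin :: "complex \<Rightarrow> complex \<Rightarrow> cl" where
  "lin x y = cl_scal x + cl_smul y e"

lemma lin_central: "cl_central M (lin x y)"
  unfolding lin_def by (intro cl_central_add cl_central_scal cl_central_smul e_central)

lemma lin_in: "cl_in M (lin x y)"
  using lin_central by (rule cl_centralD)

lemma lin_mul [simp]: "cl_mul (lin x y) (lin x' y') = lin (x * x' + s ^ 2 * y * y') (x * y' + y * x')"
proof -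
  have e: "cl_in M e"
    using e_central by (rule cl_centralD)
  have "cl_mul (lin x y) (lin x' y') = cl_smul x (lin x' y') + cl_smul y (cl_mul e (lin x' y'))"
    unfolding lin_def[of x y] using e lin_in
    by (simp add: cl_mul_add_left[of M] cl_mul_scal_left[of M] cl_mul_smul_left[of M]
        cl_in_scal cl_in_smul)
  also have "cl_mul e (lin x' y') = cl_smul x' e + cl_smul y' (cl_scal (s ^ 2))"
    unfolding lin_def using e
    by (simp add: cl_mul_add_right[of M] cl_mul_scal_right[of M] cl_mul_smul_right[of M] e_square
        cl_in_scal cl_in_smul)
  finally have "cl_mul (lin x y) (lin x' y')
      = cl_smul x (lin x' y') + cl_smul y (cl_smul x' e + cl_smul y' (cl_scal (s ^ 2)))" .
  then show ?thesis
    by (simp add: lin_def fun_eq_iff cl_smul_def cl_scal_def algebra_simps)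
qed

lemma lin_add [simp]: "lin x y + lin x' y' = lin (x + x') (y + y')"
  and lin_diff [simp]: "lin x y - lin x' y' = lin (x - x') (y - y')"
  and lin_smul [simp]: "cl_smul z (lin x y) = lin (z * x) (z * y)"
  and cl_scal_eq_lin: "cl_scal x = lin x 0"
  and cl_smul_e_eq_lin: "cl_smul y e = lin 0 y"
  unfolding lin_def by (auto simp: fun_eq_iff cl_smul_def cl_scal_def algebra_simps)

end

section \<open>Block matrices with central coefficients\<close>

lemma sum_fun_apply: "(\<Sum>k\<in>K. f k) x = (\<Sum>k\<in>K. f k x)"
  by (induction K rule: infinite_finite_induct) auto

lemma mat_mul_apply: "mat_mul K A B i j = (\<Sum>k<K. cl_mul (A i k) (B k j))"
  unfolding mat_mul_def by (simp add: fun_eq_iff sum_fun_apply)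

lemma sum_lessThan_add:
  fixes m n :: nat
  shows "(\<Sum>k<m + n. f k) = (\<Sum>k<m. f k) + (\<Sum>k<n. f (k + m))"
  by (induction n) (auto simp: add.commute add.left_commute)

lemma mat_over_mono: "mat_over m N A \<Longrightarrow> m \<le> M \<Longrightarrow> mat_over M N A"
  unfolding mat_over_def by (blast intro: cl_in_mono)

lemma mat_over_mul: "mat_over M N A \<Longrightarrow> mat_over M N B \<Longrightarrow> mat_over M N (mat_mul N A B)"
  unfolding mat_over_def mat_mul_apply by (auto intro!: cl_in_sum cl_in_mul)

lemma mat_over_diag_const: "cl_in M x \<Longrightarrow> mat_over M N (mat_diag_const x)"
  unfolding mat_over_def mat_diag_const_def by simp

lemma mat_eq_refl [simp]: "mat_eq K A A"
  unfolding mat_eq_def by simp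

lemma mat_eq_trans: "mat_eq K A B \<Longrightarrow> mat_eq K B C \<Longrightarrow> mat_eq K A C"
  unfolding mat_eq_def by simp

lemma mat_mul_cong: "mat_eq K A A' \<Longrightarrow> mat_eq K B B' \<Longrightarrow> mat_eq K (mat_mul K A B) (mat_mul K A' B')"
  unfolding mat_eq_def mat_mul_apply by (auto intro!: sum.cong)

lemma mat_add_cong: "mat_eq K A A' \<Longrightarrow> mat_eq K B B' \<Longrightarrow> mat_eq K (A + B) (A' + B')"
  unfolding mat_eq_def by simp

lemma mat_block_cong:
  "mat_eq N A A' \<Longrightarrow> mat_eq N B B' \<Longrightarrow> mat_eq N C C' \<Longrightarrow> mat_eq N D D' \<Longrightarrow>
    mat_eq (2 * N) (mat_block N A B C D) (mat_block N A' B' C' D')"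
  unfolding mat_eq_def mat_block_def by auto

lemma mat_mul_block:
  "mat_eq (2 * N) (mat_mul (2 * N) (mat_block N A B C D) (mat_block N A' B' C' D'))
     (mat_block N (mat_mul N A A' + mat_mul N B C') (mat_mul N A B' + mat_mul N B D')
                  (mat_mul N C A' + mat_mul N D C') (mat_mul N C B' + mat_mul N D D'))"
  unfolding mat_eq_def mat_block_def mat_mul_apply mult_2 sum_lessThan_add by auto

lemma mat_zero_eq: "mat_zero = 0"
  unfolding mat_zero_def by (simp add: fun_eq_iff)

lemma mat_mul_zero_right [simp]: "mat_mul N A 0 = 0"
  unfolding mat_mul_def by (simp add: fun_eq_iff)

lemma mat_mul_lmul_left:
  assumes "cl_in M a" "mat_over M N A" "mat_over M N B"
  shows "mat_eq N (mat_mul N (mat_lmul a A) B) (mat_lmul a (mat_mul N A B))"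
  unfolding mat_eq_def
proof (intro allI impI)
  fix i j assume "i < N" "j < N"
  then have "cl_in M (A i k)" "cl_in M (B k j)" if "k < N" for k
    using assms(2,3) that by (auto simp: mat_over_def)
  moreover from this have "cl_mul a (\<Sum>k<N. cl_mul (A i k) (B k j))
      = (\<Sum>k<N. cl_mul a (cl_mul (A i k) (B k j)))"
    by (intro cl_mul_sum_right[OF assms(1)]) (simp add: cl_in_mul)
  ultimately show "mat_mul N (mat_lmul a A) B i j = mat_lmul a (mat_mul N A B) i j"
    unfolding mat_mul_apply mat_lmul_def using assms(1) by (simp add: cl_mul_assoc[of M])
qed

lemma mat_mul_lmul_lmul:
  assumes "cl_central M a" "cl_central M b" "mat_over M N A" "mat_over M N B"
  shows "mat_eq N (mat_mul N (mat_lmul a A) (mat_lmul b B)) (mat_lmul (cl_mul a b) (mat_mul N A B))"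
  unfolding mat_eq_def
proof (intro allI impI)
  fix i j assume "i < N" "j < N"
  then have "cl_in M (A i k)" "cl_in M (B k j)" if "k < N" for k
    using assms(3,4) that by (auto simp: mat_over_def)
  moreover have ab: "cl_in M (cl_mul a b)"
    using assms(1,2) by (simp add: cl_centralD cl_in_mul)
  moreover from calculation
  have "cl_mul (cl_mul a b) (\<Sum>k<N. cl_mul (A i k) (B k j))
      = (\<Sum>k<N. cl_mul (cl_mul a b) (cl_mul (A i k) (B k j)))"
    by (intro cl_mul_sum_right[OF ab]) (simp add: cl_in_mul)
  ultimately show "mat_mul N (mat_lmul a A) (mat_lmul b B) i j
      = mat_lmul (cl_mul a b) (mat_mul N A B) i j"
    unfolding mat_mul_apply mat_lmul_def using assms(1,2)
    by (simp add: cl_mul_central_interchange[of M])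
qed

lemma mat_mul_block_diag:
  assumes "cl_in M a1" "cl_in M a2" "cl_in M a3" "cl_in M a4"
    and "mat_over M N A" "cl_in M x" "cl_in M y"
  shows "mat_eq (2 * N)
    (mat_mul (2 * N) (mat_block N (mat_lmul a1 A) (mat_lmul a2 A) (mat_lmul a3 A) (mat_lmul a4 A))
      (mat_block N (mat_diag_const x) mat_zero mat_zero (mat_diag_const y)))
    (mat_block N
       (mat_lmul a1 (mat_mul N A (mat_diag_const x))) (mat_lmul a2 (mat_mul N A (mat_diag_const y)))
       (mat_lmul a3 (mat_mul N A (mat_diag_const x))) (mat_lmul a4 (mat_mul N A (mat_diag_const y))))"
  by (rule mat_eq_trans[OF mat_mul_block])
     (simp add: mat_zero_eq, intro mat_block_cong mat_mul_lmul_left[of M] mat_over_diag_const assms)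

lemma mat_mul_block_lmul:
  assumes "\<forall>c\<in>{a1, a2, a3, a4, b1, b2, b3, b4}. cl_central M c"
    and "mat_over M N A1" "mat_over M N A2" "mat_over M N B"
  shows "mat_eq (2 * N)
    (mat_mul (2 * N) (mat_block N (mat_lmul a1 A1) (mat_lmul a2 A2) (mat_lmul a3 A1) (mat_lmul a4 A2))
      (mat_block N (mat_lmul b1 B) (mat_lmul b2 B) (mat_lmul b3 B) (mat_lmul b4 B)))
    (mat_block N
      (mat_lmul (cl_mul a1 b1) (mat_mul N A1 B) + mat_lmul (cl_mul a2 b3) (mat_mul N A2 B))
      (mat_lmul (cl_mul a1 b2) (mat_mul N A1 B) + mat_lmul (cl_mul a2 b4) (mat_mul N A2 B))
      (mat_lmul (cl_mul a3 b1) (mat_mul N A1 B) + mat_lmul (cl_mul a4 b3) (mat_mul N A2 B))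
      (mat_lmul (cl_mul a3 b2) (mat_mul N A1 B) + mat_lmul (cl_mul a4 b4) (mat_mul N A2 B)))"
  using assms
  by (intro mat_eq_trans[OF mat_mul_block] mat_block_cong mat_add_cong mat_mul_lmul_lmul[of M]) simp_all

text \<open>With A = P_n and B = P_n^-1 this is the map phi_n of the paper.\<close>

abbreviation mat_sandwich :: "nat \<Rightarrow> clmat \<Rightarrow> cl \<Rightarrow> clmat \<Rightarrow> clmat" where
  "mat_sandwich N A x B \<equiv> mat_mul N (mat_mul N A (mat_diag_const x)) B"

lemma mat_sandwich_apply:
  "mat_sandwich N A x B i j = (\<Sum>k<N. cl_mul (cl_mul (A i k) x) (B k j))"
proof -
  have "mat_mul N A (mat_diag_const x) i k = cl_mul (A i k) x" if "k < N" for k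
    using that unfolding mat_mul_apply mat_diag_const_def
    by (simp add: if_distrib if_distribR sum.delta cong: if_cong)
  then show ?thesis
    unfolding mat_mul_apply[of N "mat_mul N A (mat_diag_const x)"] by simp
qed

lemma mat_sandwich_add_mul_central:
  assumes c: "cl_central M c" and x: "cl_in M x" and y: "cl_in M y"
    and A: "mat_over M N A" and B: "mat_over M N B" and "i < N" "j < N"
  shows "mat_sandwich N A (x + cl_mul y c) B i j
      = mat_sandwich N A x B i j + cl_mul (mat_sandwich N A y B i j) c"
    and "mat_sandwich N A (x - cl_mul y c) B i j
      = mat_sandwich N A x B i j - cl_mul (mat_sandwich N A y B i j) c"
proof -
  have c_in: "cl_in M c" and yc: "cl_in M (cl_mul y c)"
    using c y by (auto simp: cl_centralD cl_in_mul)
  have entries: "cl_in M (A i k)" "cl_in M (B k j)" if "k < N" for k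
    using A B \<open>i < N\<close> \<open>j < N\<close> that by (auto simp: mat_over_def)
  have pull_out: "cl_mul (cl_mul p (cl_mul y c)) q = cl_mul (cl_mul (cl_mul p y) q) c"
    if p: "cl_in M p" and q: "cl_in M q" for p q
  proof -
    have "cl_mul (cl_mul p (cl_mul y c)) q = cl_mul (cl_mul p y) (cl_mul c q)"
      using p q y c_in by (simp add: cl_mul_assoc[of M] cl_in_mul)
    also have "\<dots> = cl_mul (cl_mul (cl_mul p y) q) c"
      using p q y c_in by (simp add: cl_central_commute[OF c q] cl_mul_assoc[of M] cl_in_mul)
    finally show ?thesis .
  qed
  have sum_c: "(\<Sum>k<N. cl_mul (cl_mul (cl_mul (A i k) y) (B k j)) c)
      = cl_mul (\<Sum>k<N. cl_mul (cl_mul (A i k) y) (B k j)) c"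
    using entries y by (intro cl_mul_sum_left[OF c_in, symmetric]) (simp add: cl_in_mul)
  show "mat_sandwich N A (x + cl_mul y c) B i j
      = mat_sandwich N A x B i j + cl_mul (mat_sandwich N A y B i j) c"
    unfolding mat_sandwich_apply sum_c[symmetric] sum.distrib[symmetric]
    using entries x yc
    by (intro sum.cong refl)
       (simp add: cl_mul_add_right[of M] cl_mul_add_left[of M] cl_in_mul pull_out)
  show "mat_sandwich N A (x - cl_mul y c) B i j
      = mat_sandwich N A x B i j - cl_mul (mat_sandwich N A y B i j) c"
    unfolding mat_sandwich_apply sum_c[symmetric] sum_subtractf[symmetric]
    using entries x yc
    by (intro sum.cong refl)
       (simp add: cl_mul_diff_right[of M] cl_mul_diff_left[of M] cl_in_mul pull_out)
qed

section \<open>The matrices P_(n+1) and P'_(n+1)\<close>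

context central_root
begin

lemma cl_smul_mul_lin: "cl_in M a \<Longrightarrow> cl_smul z (cl_mul (lin x y) a) = cl_mul (lin (z * x) (z * y)) a"
  using lin_in by (simp add: cl_mul_smul_left[of M, symmetric])

lemma uminus_mul_lin: "cl_in M a \<Longrightarrow> - cl_mul (lin x y) a = cl_mul (lin (- x) (- y)) a"
  using cl_smul_mul_lin[of a "-1" x y] by (simp add: cl_smul_def fun_eq_iff)

lemma mul_lin_commute: "cl_in M a \<Longrightarrow> cl_mul a (lin x y) = cl_mul (lin x y) a"
  using cl_central_commute[OF lin_central] by simp

definition proj_plus :: cl where
  "proj_plus = lin (1 / 2) (1 / (2 * s))"

definition proj_minus :: cl where
  "proj_minus = lin (1 / 2) (- 1 / (2 * s))"

text \<open>P_(n+1) and P'_(n+1) of the paper, with r written as s^2.\<close>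

definition lift_left :: "nat \<Rightarrow> clmat \<Rightarrow> clmat" where
  "lift_left N A = mat_smul (1 / 2) (mat_block N
     (mat_lmul (cl_add cl_one (cl_smul (1 / s) e)) A)
     (mat_neg (mat_lmul (cl_minus (cl_scal s) e) A))
     (mat_lmul (cl_smul (1 / s ^ 2) (cl_minus (cl_scal s) e)) A)
     (mat_lmul (cl_add cl_one (cl_smul (1 / s) e)) A))"

definition lift_right :: "nat \<Rightarrow> clmat \<Rightarrow> clmat" where
  "lift_right N B = mat_smul (1 / 2) (mat_block N
     (mat_rmul B (cl_add cl_one (cl_smul (1 / s) e)))
     (mat_rmul B (cl_minus (cl_scal s) e))
     (mat_neg (mat_rmul B (cl_smul (1 / s ^ 2) (cl_minus (cl_scal s) e))))
     (mat_rmul B (cl_add cl_one (cl_smul (1 / s) e))))"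

lemma paper_factors_eq_lin:
  "cl_add cl_one (cl_smul z e) = lin 1 z" "cl_minus (cl_scal z) e = lin z (- 1)"
  unfolding cl_one_def by (simp_all add: cl_scal_eq_lin cl_smul_e_eq_lin)
     (simp add: lin_def cl_smul_def fun_eq_iff)

lemma lift_left_blocks:
  assumes "mat_over M N A"
  shows "mat_eq (2 * N) (lift_left N A)
    (mat_block N (mat_lmul proj_plus A) (mat_lmul (cl_smul (- s) proj_minus) A)
       (mat_lmul (cl_smul (1 / s) proj_minus) A) (mat_lmul proj_plus A))"
  using assms s_nonzero
  unfolding mat_eq_def lift_left_def mat_block_def mat_smul_def mat_lmul_def mat_neg_def
    proj_plus_def proj_minus_def paper_factors_eq_lin mat_over_def
  by (auto simp: cl_smul_mul_lin uminus_mul_lin lin_smul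
      intro!: arg_cong2[where f = cl_mul] arg_cong2[where f = lin])
     (auto simp: field_simps power2_eq_square)

lemma lift_right_blocks:
  assumes "mat_over M N B"
  shows "mat_eq (2 * N) (lift_right N B)
    (mat_block N (mat_lmul proj_plus B) (mat_lmul (cl_smul s proj_minus) B)
       (mat_lmul (cl_smul (- 1 / s) proj_minus) B) (mat_lmul proj_plus B))"
  using assms s_nonzero
  unfolding mat_eq_def lift_right_def mat_block_def mat_smul_def mat_rmul_def mat_lmul_def mat_neg_def
    proj_plus_def proj_minus_def paper_factors_eq_lin mat_over_def
  by (auto simp: mul_lin_commute cl_smul_mul_lin uminus_mul_lin lin_smul
      intro!: arg_cong2[where f = cl_mul] arg_cong2[where f = lin])
     (auto simp: field_simps power2_eq_square)

lemma cl_one_eq_lin: "cl_one = lin 1 0"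
  and zero_eq_lin: "0 = lin 0 0"
  unfolding cl_one_def
  by (simp_all add: cl_scal_eq_lin) (simp add: lin_def cl_scal_def cl_smul_def fun_eq_iff)

lemma lift_left_right_inverse:
  assumes A: "mat_over M N A" and B: "mat_over M N B" and AB: "mat_eq N (mat_mul N A B) mat_id"
  shows "mat_eq (2 * N) (mat_mul (2 * N) (lift_left N A) (lift_right N B)) mat_id"
  using AB s_nonzero
  by (intro mat_eq_trans[OF mat_mul_cong[OF lift_left_blocks[OF A] lift_right_blocks[OF B]]]
      mat_eq_trans[OF mat_mul_block_lmul[OF _ A A B]])
     (auto simp: mat_eq_def mat_block_def mat_lmul_def mat_id_def mat_diag_const_def proj_plus_def
        proj_minus_def cl_one_eq_lin zero_eq_lin lin_central intro!: arg_cong2[where f = lin],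
      auto simp: field_simps power2_eq_square)

lemma lift_right_left_inverse:
  assumes A: "mat_over M N A" and B: "mat_over M N B" and BA: "mat_eq N (mat_mul N B A) mat_id"
  shows "mat_eq (2 * N) (mat_mul (2 * N) (lift_right N B) (lift_left N A)) mat_id"
  using BA s_nonzero
  by (intro mat_eq_trans[OF mat_mul_cong[OF lift_right_blocks[OF B] lift_left_blocks[OF A]]]
      mat_eq_trans[OF mat_mul_block_lmul[OF _ B B A]])
     (auto simp: mat_eq_def mat_block_def mat_lmul_def mat_id_def mat_diag_const_def proj_plus_def
        proj_minus_def cl_one_eq_lin zero_eq_lin lin_central intro!: arg_cong2[where f = lin],
      auto simp: field_simps power2_eq_square)

lemma cl_is_scalar_eq: "cl_is_scalar a \<Longrightarrow> a = cl_scal (a {})"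
  unfolding cl_is_scalar_def cl_scal_def by auto

lemma lift_conj_block_diag:
  assumes A: "mat_over M N A" and B: "mat_over M N B" and a0: "cl_in M a0" and a1: "cl_in M a1"
    and scalar: "\<forall>i<N. \<forall>j<N.
      cl_is_scalar (mat_sandwich N A a0 B i j) \<and> cl_is_scalar (mat_sandwich N A a1 B i j)"
  shows "mat_eq (2 * N)
     (mat_mul (2 * N) (mat_mul (2 * N) (lift_left N A)
        (mat_block N (mat_diag_const (a0 + cl_mul a1 e)) mat_zero mat_zero
           (mat_diag_const (a0 - cl_mul a1 e)))) (lift_right N B))
     (mat_block N (mat_add (mat_sandwich N A a0 B) (mat_smul s (mat_sandwich N A a1 B))) mat_zero
        mat_zero (mat_minus (mat_sandwich N A a0 B) (mat_smul s (mat_sandwich N A a1 B))))"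
proof -
  define z0 where "z0 i j = mat_sandwich N A a0 B i j {}" for i j
  define z1 where "z1 i j = mat_sandwich N A a1 B i j {}" for i j
  have e: "cl_in M e"
    using e_central by (rule cl_centralD)
  have x: "cl_in M (a0 + cl_mul a1 e)" and y: "cl_in M (a0 - cl_mul a1 e)"
    using a0 a1 e by (simp_all add: cl_in_add cl_in_diff cl_in_mul)
  have entries: "mat_sandwich N A a0 B i j = lin (z0 i j) 0"
    "mat_sandwich N A a1 B i j = lin (z1 i j) 0"
    "mat_sandwich N A (a0 + cl_mul a1 e) B i j = lin (z0 i j) (z1 i j)"
    "mat_sandwich N A (a0 - cl_mul a1 e) B i j = lin (z0 i j) (- z1 i j)"
    if "i < N" "j < N" for i j
  proof -
    have "mat_sandwich N A a0 B i j = cl_scal (z0 i j)" "mat_sandwich N A a1 B i j = cl_scal (z1 i j)"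
      using scalar that unfolding z0_def z1_def by (blast intro: cl_is_scalar_eq)+
    then show a0_entry: "mat_sandwich N A a0 B i j = lin (z0 i j) 0"
      and a1_entry: "mat_sandwich N A a1 B i j = lin (z1 i j) 0"
      by (simp_all add: cl_scal_eq_lin)
    have "cl_mul (lin (z1 i j) 0) e = lin 0 (z1 i j)"
      using e by (simp add: cl_scal_eq_lin[symmetric] cl_mul_scal_left cl_smul_e_eq_lin)
    then show "mat_sandwich N A (a0 + cl_mul a1 e) B i j = lin (z0 i j) (z1 i j)"
      and "mat_sandwich N A (a0 - cl_mul a1 e) B i j = lin (z0 i j) (- z1 i j)"
      using mat_sandwich_add_mul_central[OF e_central a0 a1 A B that] a0_entry a1_entry by simp_all
  qed
  have Ax: "mat_over M N (mat_mul N A (mat_diag_const (a0 + cl_mul a1 e)))"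
    and Ay: "mat_over M N (mat_mul N A (mat_diag_const (a0 - cl_mul a1 e)))"
    using A x y by (simp_all add: mat_over_mul mat_over_diag_const)
  show ?thesis
    using s_nonzero x y entries
    by (intro mat_eq_trans[OF mat_mul_cong[OF mat_eq_trans[OF mat_mul_cong[OF lift_left_blocks[OF A]
          mat_eq_refl] mat_mul_block_diag] lift_right_blocks[OF B]]]
        mat_eq_trans[OF mat_mul_block_lmul[OF _ Ax Ay B]])
       (auto simp: mat_eq_def mat_block_def mat_lmul_def mat_add_def mat_minus_def mat_smul_def
          mat_zero_eq proj_plus_def proj_minus_def zero_eq_lin lin_central lin_in A
          intro!: arg_cong2[where f = lin],
        auto simp: field_simps power2_eq_square)
qed

end

theorem theorem14:
  fixes n :: nat and P Q :: clmat and sr :: complex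
  defines "N \<equiv> 2 ^ (n div 2)"
    and "e \<equiv> cl_top (n + 1)"
    and "r \<equiv> (-1 :: complex) ^ ((n + 1) * (n + 2) div 2)"
  assumes n_even: "even n"
    and P_over: "mat_over n N P" and Q_over: "mat_over n N Q"
    and PQ: "mat_eq N (mat_mul N P Q) mat_id"
    and QP: "mat_eq N (mat_mul N Q P) mat_id"
    and phi_scalar: "\<forall>a. cl_in n a \<longrightarrow>
        (\<forall>i<N. \<forall>j<N. cl_is_scalar (mat_mul N (mat_mul N P (mat_diag_const a)) Q i j))"
    and sr: "sr ^ 2 = r"
  shows
   "let phi = (\<lambda>a. mat_mul N (mat_mul N P (mat_diag_const a)) Q);
        u = cl_add cl_one (cl_smul (1 / sr) e);
        v = cl_minus (cl_scal sr) e;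
        Pn1 = mat_smul (1/2) (mat_block N
                 (mat_lmul u P) (mat_neg (mat_lmul v P))
                 (mat_lmul (cl_smul (1 / r) v) P) (mat_lmul u P));
        Pn1' = mat_smul (1/2) (mat_block N
                 (mat_rmul Q u) (mat_rmul Q v)
                 (mat_neg (mat_rmul Q (cl_smul (1 / r) v))) (mat_rmul Q u))
    in cl_mul e e = cl_scal r
     \<and> (\<forall>a. cl_in (n + 1) a \<longrightarrow>
          (\<exists>a0 a1. cl_in n a0 \<and> cl_in n a1 \<and>
              a = cl_add a0 (cl_mul a1 e) \<and> a = cl_add a0 (cl_mul e a1)))
     \<and> mat_eq (2 * N) (mat_mul (2 * N) Pn1 Pn1') mat_id
     \<and> mat_eq (2 * N) (mat_mul (2 * N) Pn1' Pn1) mat_id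
     \<and> (\<forall>a a0 a1. cl_in n a0 \<and> cl_in n a1 \<and> a = cl_add a0 (cl_mul a1 e) \<longrightarrow>
          mat_eq (2 * N)
            (mat_mul (2 * N) (mat_mul (2 * N) Pn1
               (mat_block N (mat_diag_const a) mat_zero mat_zero
                            (mat_diag_const (cl_minus a0 (cl_mul a1 e))))) Pn1')
            (mat_block N (mat_add (phi a0) (mat_smul sr (phi a1))) mat_zero
                         mat_zero (mat_minus (phi a0) (mat_smul sr (phi a1)))))"
proof -
  have e_central: "cl_central (n + 1) e"
    unfolding e_def using n_even by (simp add: cl_central_top)
  have e_square: "cl_mul e e = cl_scal (sr ^ 2)"
    unfolding e_def sr r_def using cl_top_square[of "n + 1"] by (simp add: add.assoc)
  have "sr \<noteq> 0"
    using sr unfolding r_def by auto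
  then interpret central_root "n + 1" e sr
    using e_central e_square by unfold_locales
  have P: "mat_over (n + 1) N P" and Q: "mat_over (n + 1) N Q"
    using P_over Q_over by (simp_all add: mat_over_mono)
  have decompose: "\<exists>a0 a1. cl_in n a0 \<and> cl_in n a1 \<and> a = a0 + cl_mul a1 e \<and> a = a0 + cl_mul e a1"
    if "cl_in (n + 1) a" for a
    using cl_top_decompose[OF that] cl_central_commute[OF e_central] cl_in_mono
    unfolding e_def[symmetric] by (metis le_add1)
  show ?thesis
    unfolding Let_def sr[symmetric] lift_left_def[symmetric] lift_right_def[symmetric]
    using e_square decompose phi_scalar
    by (auto intro!: lift_left_right_inverse[OF P Q PQ]
        lift_right_left_inverse[OF P Q QP] lift_conj_block_diag[OF P Q] intro: cl_in_mono)
qed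

end
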